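(* Let $C_0,C_1,C_2$ be the constants of the following fact: for the Square-Root SLOPE estimator $\hat\beta$ (with $A\ge16+4\sqrt2$), for all $\delta\in(0,1]$ and $n_1>\frac{C_0}{\delta^2}s\log(\frac{ep}{s})$, $\sup_{|\beta|_0\le s}\mathbf P_\beta(\|\hat\beta-\beta\|\ge\delta\sigma)\le C_1(\frac{s}{2p})^{C_2s}$. Let $s$ be an integer with $s\le p/2$, $\delta\in(0,1]$, and let $\hat\eta$ be the selector defined below with threshold $t=t_{\sigma\sqrt{1+\delta^2}}$. Then for all $n_1>\frac{C_0}{\delta^2}s\log(\frac{ep}{s})$, $$\sup_{\beta\in\Omega^p_{s,a}}\mathbf E_\beta|\hat\eta-\eta_\beta|\le2\psi(n_2,p,s,a,\sigma\sqrt{1+\delta^2})+C_1(s/2)^{C_2s}p^{1-C_2s},$$ $$\sup_{\beta\in\Omega^p_{s,a}}\mathbf P_\beta(\hat\eta\neq\eta_\beta)\le2\psi(n_2,p,s,a,\sigma\sqrt{1+\delta^2})+C_1(s/2)^{C_2s}p^{-C_2s}.$$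
   Context: Model: $Y=X\beta+\sigma\xi\in\mathbb{R}^n$, $X\in\mathbb{R}^{n\times p}$ with i.i.d. $\mathcal N(0,1)$ entries, $\xi\sim\mathcal N(0,\mathbb I_n)$ independent of $X$, $\sigma>0$. $\Omega^p_{s,a}=\{\beta\in\mathbb{R}^p:|\beta|_0\le s,\ |\beta_i|\ge a \text{ whenever }\beta_i\ne0\}$, $\eta_\beta=(\mathbf 1\{\beta_i\neq0\})_{i\le p}$, $|\cdot|$ the Hamming distance on $\{0,1\}^p$. The sample is split into disjoint subsamples $(X^{(1)},Y^{(1)})$ of size $n_1$ and $(X^{(2)},Y^{(2)})$ of size $n_2$, $n=n_1+n_2$. $\hat\beta$ is the Square-Root SLOPE estimator on the first subsample: $\hat\beta\in\arg\min_\beta\big(\|Y^{(1)}-X^{(1)}\beta\|/\sqrt{n_1}+2\sum_{j}\lambda_j\beta^*_j\big)$ with $\lambda_j=A\sqrt{\log(2p/j)/n}$ and $\beta^*_1\ge\dots\ge\beta^*_p$ the sorted $|\beta_i|$. The selector: $\hat\eta_i=\mathbf 1\Big\{\frac{|X_i^{(2)\top}(Y^{(2)}-\sum_{j\neq i}X^{(2)}_j\hat\beta_j)|}{\|X^{(2)}_i\|}>t(X^{(2)}_i)\Big\}$, $i=1,\dots,p$, with $X^{(2)}_i$ the $i$th column of $X^{(2)}$. For $\sigma'>0$, $t_{\sigma'}(u)=\frac{a\|u\|}{2}+\frac{\sigma'^2\log(\frac ps-1)}{a\|u\|}$. Define $\psi(m,p,s,a,\sigma')=(p-s)\mathbf P(\sigma'\varepsilon>t_{\sigma'}(\zeta))+s\,\mathbf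 P(\sigma'\varepsilon>(a\|\zeta\|-t_{\sigma'}(\zeta))_+)$ with $\varepsilon\sim\mathcal N(0,1)$, $\zeta\sim\mathcal N(0,\mathbb I_m)$ independent, and $x_+=\max(x,0)$. *)

theory Defs
  imports "HOL-Probability.Probability"
begin

definition std_gauss :: "real measure" where
  "std_gauss = density lborel std_normal_density"

definition gauss_vec :: "nat \<Rightarrow> (nat \<Rightarrow> real) measure" where
  "gauss_vec m = PiM {..<m} (\<lambda>_. std_gauss)"

definition vnorm :: "nat \<Rightarrow> (nat \<Rightarrow> real) \<Rightarrow> real" where
  "vnorm m u = sqrt (\<Sum>k<m. (u k)\<^sup>2)"

(* Sample space: design X (rows {..<n}, columns {..<p}, iid N(0,1)) and noise xi ~ N(0,I_n),
   independent *)
definition data_space :: "nat \<Rightarrow> nat \<Rightarrow> ((nat \<Rightarrow> nat \<Rightarrow> real) \<times> (nat \<Rightarrow> real)) measure" where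
  "data_space n p = PiM {..<n} (\<lambda>_. gauss_vec p) \<Otimes>\<^sub>M gauss_vec n"

definition Yobs :: "nat \<Rightarrow> real \<Rightarrow> (nat \<Rightarrow> real) \<Rightarrow> (nat \<Rightarrow> nat \<Rightarrow> real) \<times> (nat \<Rightarrow> real) \<Rightarrow> nat \<Rightarrow> real" where
  "Yobs p \<sigma> \<beta> \<omega> k = (\<Sum>i<p. fst \<omega> k i * \<beta> i) + \<sigma> * snd \<omega> k"

definition X1 :: "nat \<Rightarrow> nat \<Rightarrow> (nat \<Rightarrow> nat \<Rightarrow> real) \<times> (nat \<Rightarrow> real) \<Rightarrow> nat \<Rightarrow> nat \<Rightarrow> real" where
  "X1 n1 p \<omega> = (\<lambda>k i. if k < n1 \<and> i < p then fst \<omega> k i else 0)"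

definition Y1 :: "nat \<Rightarrow> nat \<Rightarrow> real \<Rightarrow> (nat \<Rightarrow> real) \<Rightarrow> (nat \<Rightarrow> nat \<Rightarrow> real) \<times> (nat \<Rightarrow> real) \<Rightarrow> nat \<Rightarrow> real" where
  "Y1 n1 p \<sigma> \<beta> \<omega> = (\<lambda>k. if k < n1 then Yobs p \<sigma> \<beta> \<omega> k else 0)"

definition X2 :: "nat \<Rightarrow> (nat \<Rightarrow> nat \<Rightarrow> real) \<times> (nat \<Rightarrow> real) \<Rightarrow> nat \<Rightarrow> nat \<Rightarrow> real" where
  "X2 n1 \<omega> = (\<lambda>k i. fst \<omega> (n1 + k) i)"

definition Y2 :: "nat \<Rightarrow> nat \<Rightarrow> real \<Rightarrow> (nat \<Rightarrow> real) \<Rightarrow> (nat \<Rightarrow> nat \<Rightarrow> real) \<times> (nat \<Rightarrow> real) \<Rightarrow> nat \<Rightarrow> real" where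
  "Y2 n1 p \<sigma> \<beta> \<omega> = (\<lambda>k. Yobs p \<sigma> \<beta> \<omega> (n1 + k))"

(* beta^*_1 >= ... >= beta^*_p : sorted absolute values (0-based list) *)
definition sorted_abs :: "nat \<Rightarrow> (nat \<Rightarrow> real) \<Rightarrow> real list" where
  "sorted_abs p b = rev (sort (map (\<lambda>i. \<bar>b i\<bar>) [0..<p]))"

definition slope_lambda :: "real \<Rightarrow> nat \<Rightarrow> nat \<Rightarrow> nat \<Rightarrow> real" where
  "slope_lambda A n p j = A * sqrt (ln (2 * real p / real j) / real n)"

(* Square-Root SLOPE objective on a sample (X, Y) of size n1; lambda uses the total n *)
definition sqrt_slope_obj :: "real \<Rightarrow> nat \<Rightarrow> nat \<Rightarrow> nat \<Rightarrow> (nat \<Rightarrow> nat \<Rightarrow> real) \<Rightarrow> (nat \<Rightarrow> real) \<Rightarrow> (nat \<Rightarrow> real) \<Rightarrow> real" where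
  "sqrt_slope_obj A n n1 p X Y b =
     vnorm n1 (\<lambda>k. Y k - (\<Sum>i<p. X k i * b i)) / sqrt (real n1)
     + 2 * (\<Sum>j<p. slope_lambda A n p (Suc j) * sorted_abs p b ! j)"

definition thr :: "real \<Rightarrow> real \<Rightarrow> nat \<Rightarrow> nat \<Rightarrow> nat \<Rightarrow> (nat \<Rightarrow> real) \<Rightarrow> real" where
  "thr a \<sigma>' p s m u = a * vnorm m u / 2 + \<sigma>'\<^sup>2 * ln (real p / real s - 1) / (a * vnorm m u)"

definition psi :: "nat \<Rightarrow> nat \<Rightarrow> nat \<Rightarrow> real \<Rightarrow> real \<Rightarrow> real" where
  "psi m p s a \<sigma>' =
     (let N = std_gauss \<Otimes>\<^sub>M gauss_vec m in
      (real p - real s) * measure N {x \<in> space N. \<sigma>' * fst x > thr a \<sigma>' p s m (snd x)}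
      + real s * measure N {x \<in> space N. \<sigma>' * fst x > max 0 (a * vnorm m (snd x) - thr a \<sigma>' p s m (snd x))})"

(* Omega^p_{s,a} (vectors in R^p, represented with zero entries beyond p) *)
definition Omega :: "nat \<Rightarrow> nat \<Rightarrow> real \<Rightarrow> (nat \<Rightarrow> real) set" where
  "Omega p s a = {\<beta>. (\<forall>i\<ge>p. \<beta> i = 0) \<and> card {i. i < p \<and> \<beta> i \<noteq> 0} \<le> s
                      \<and> (\<forall>i<p. \<beta> i \<noteq> 0 \<longrightarrow> \<bar>\<beta> i\<bar> \<ge> a)}"

definition eta :: "(nat \<Rightarrow> real) \<Rightarrow> nat \<Rightarrow> bool" where
  "eta \<beta> i = (\<beta> i \<noteq> 0)"

definition selector :: "nat \<Rightarrow> nat \<Rightarrow> ((nat \<Rightarrow> real) \<Rightarrow> real) \<Rightarrow> (nat \<Rightarrow> nat \<Rightarrow> real) \<Rightarrow> (nat \<Rightarrow> real) \<Rightarrow> (nat \<Rightarrow> real) \<Rightarrow> nat \<Rightarrow> bool" where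
  "selector n2 p t X Y bh i =
     (\<bar>\<Sum>k<n2. X k i * (Y k - (\<Sum>j\<in>{..<p} - {i}. X k j * bh j))\<bar> / vnorm n2 (\<lambda>k. X k i)
        > t (\<lambda>k. X k i))"

end

theory Submission
  imports Defs
begin

(*
  Split every misclassification into the event that the first-sample estimate is far from beta,
  which the Square-Root SLOPE bound controls, and the event that it is close but coordinate i
  is still misclassified.  Given the first subsample and the i-th column X_i of the second one,
  the statistic X_i'(Y - sum_{j<>i} X_j betahat_j)/|X_i| equals |X_i| beta_i plus a centred normal
  variable of variance sum_{j<>i} (beta_j - betahat_j)^2 + sigma^2 < sigma^2 (1 + delta^2).
  Hence the conditional misclassification probability is at most twice that of the comparison
  variable sigma sqrt(1 + delta^2) eps crossing the threshold, and integrating over X_i gives the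
  two terms of psi.  Summing over the coordinates yields the expectation bound, and a union
  bound the probability bound.
*)

section \<open>Standard normal vectors\<close>

lemma sets_std_gauss [measurable_cong, simp]: "sets std_gauss = sets borel"
  by (simp add: std_gauss_def)

lemma space_std_gauss [simp]: "space std_gauss = UNIV"
  by (simp add: std_gauss_def)

lemma prob_space_std_gauss [simp]: "prob_space std_gauss"
  using real_dist_normal_dist unfolding real_distribution_def std_gauss_def by simp

lemma measurable_std_gauss_iff [simp]: "f \<in> measurable M std_gauss \<longleftrightarrow> f \<in> borel_measurable M"
  by (subst measurable_cong_sets[OF refl sets_std_gauss]) (rule refl)

lemma product_prob_space_const: "prob_space M \<Longrightarrow> product_prob_space (\<lambda>_. M)"
  unfolding product_prob_space_def product_prob_space_axioms_def product_sigma_finite_def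
  by (auto intro: prob_space_imp_sigma_finite)

lemma prob_space_PiM_std_gauss [simp]: "prob_space (PiM I (\<lambda>_. std_gauss))"
  by (rule prob_space_PiM) simp

lemma prob_space_gauss_vec [simp]: "prob_space (gauss_vec m)"
  unfolding gauss_vec_def by simp

lemma prob_space_data_space [simp]: "prob_space (data_space n p)"
  unfolding data_space_def
  by (intro prob_space_pair prob_space_PiM) (auto simp: gauss_vec_def)

lemma distr_PiM_std_gauss_component:
  "i \<in> K \<Longrightarrow> distr (PiM K (\<lambda>_. std_gauss)) lborel (\<lambda>w. w i) = std_gauss"
proof -
  assume i: "i \<in> K"
  have "distr (PiM K (\<lambda>_. std_gauss)) lborel (\<lambda>w. w i)
      = distr (PiM K (\<lambda>_. std_gauss)) std_gauss (\<lambda>w. w i)"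
    by (rule distr_cong) auto
  also have "\<dots> = std_gauss"
    using distr_PiM_component[of K "\<lambda>_. std_gauss" i] i by simp
  finally show ?thesis .
qed

lemma distributed_std_gauss_component:
  "i \<in> K \<Longrightarrow> distributed (PiM K (\<lambda>_. std_gauss)) lborel (\<lambda>w. w i) (normal_density 0 1)"
  unfolding distributed_def
proof (intro conjI)
  assume i: "i \<in> K"
  show "distr (PiM K (\<lambda>_. std_gauss)) lborel (\<lambda>w. w i) = density lborel (\<lambda>x. ennreal (normal_density 0 1 x))"
    using distr_PiM_std_gauss_component[OF i] by (simp add: std_gauss_def)
  show "(\<lambda>w. w i) \<in> measurable (PiM K (\<lambda>_. std_gauss)) lborel"
    using i by (subst measurable_cong_sets[where M'="PiM K (\<lambda>_. std_gauss)" and N'=std_gauss]) auto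
qed simp

lemma indep_vars_std_gauss_components:
  assumes "K \<noteq> {}"
  shows "prob_space.indep_vars (PiM K (\<lambda>_. std_gauss)) (\<lambda>_. borel) (\<lambda>l w. w l) K"
proof -
  interpret P: prob_space "PiM K (\<lambda>_. std_gauss)" by simp
  have "distr (PiM K (\<lambda>_. std_gauss)) (PiM K (\<lambda>_. borel)) (\<lambda>x. \<lambda>l\<in>K. x l)
      = distr (PiM K (\<lambda>_. std_gauss)) (PiM K (\<lambda>_. std_gauss)) (\<lambda>x. x)"
    by (rule distr_cong) (auto intro!: sets_PiM_cong simp: space_PiM PiE_iff extensional_def fun_eq_iff)
  also have "\<dots> = PiM K (\<lambda>_. std_gauss)" by simp
  also have "\<dots> = PiM K (\<lambda>l. distr (PiM K (\<lambda>_. std_gauss)) borel (\<lambda>w. w l))"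
  proof (rule PiM_cong)
    fix l assume "l \<in> K"
    then show "std_gauss = distr (PiM K (\<lambda>_. std_gauss)) borel (\<lambda>w. w l)"
      using distr_PiM_std_gauss_component[of l K] by (simp cong: distr_cong)
  qed simp
  finally show ?thesis
    using assms by (subst P.indep_vars_iff_distr_eq_PiM') auto
qed

lemma distributed_std_gauss_lincomb:
  fixes c :: "'i \<Rightarrow> real"
  assumes K: "finite K" and v: "(\<Sum>l\<in>K. (c l)\<^sup>2) = v" "0 < v"
  shows "distributed (PiM K (\<lambda>_. std_gauss)) lborel (\<lambda>w. \<Sum>l\<in>K. c l * w l)
           (normal_density 0 (sqrt v))"
proof -
  interpret P: prob_space "PiM K (\<lambda>_. std_gauss)" by simp
  \<comment> \<open>Zero coefficients are dropped: the affine image of a normal law needs a nonzero factor.\<close>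
  define K' where "K' = {l\<in>K. c l \<noteq> 0}"
  have K'K: "K' \<subseteq> K" "finite K'" using K by (auto simp: K'_def)
  have K'ne: "K' \<noteq> {}"
  proof
    assume "K' = {}"
    then have "(\<Sum>l\<in>K. (c l)\<^sup>2) = 0" by (auto simp: K'_def)
    with v show False by simp
  qed
  then have "K \<noteq> {}" using K'K by auto
  have indep: "P.indep_vars (\<lambda>_. borel) (\<lambda>l w. c l * w l) K'"
    using P.indep_vars_compose2[OF P.indep_vars_subset[OF indep_vars_std_gauss_components[OF \<open>K \<noteq> {}\<close>] K'K(1)],
        of "\<lambda>l x. c l * x" "\<lambda>_. borel"] by simp
  have "distributed (PiM K (\<lambda>_. std_gauss)) lborel (\<lambda>w. c l * w l) (normal_density 0 \<bar>c l\<bar>)"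
    if "l \<in> K'" for l
    using P.normal_density_affine[OF distributed_std_gauss_component[of l], of "c l" 0] that
    by (simp add: K'_def)
  then have "distributed (PiM K (\<lambda>_. std_gauss)) lborel (\<lambda>w. \<Sum>l\<in>K'. c l * w l)
               (normal_density (\<Sum>l\<in>K'. 0) (sqrt (\<Sum>l\<in>K'. \<bar>c l\<bar>\<^sup>2)))"
    by (intro P.sum_indep_normal[OF K'K(2) K'ne indep]) (auto simp: K'_def)
  moreover have "(\<lambda>w. \<Sum>l\<in>K'. c l * w l) = (\<lambda>w. \<Sum>l\<in>K. c l * w l)"
    unfolding K'_def by (intro ext sum.mono_neutral_left K) auto
  moreover have "(\<Sum>l\<in>K'. \<bar>c l\<bar>\<^sup>2) = v"
    unfolding v(1)[symmetric] power2_abs K'_def by (intro sum.mono_neutral_left K) auto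
  ultimately show ?thesis by simp
qed

lemma distributed_std_gauss_scaled:
  assumes "0 < r"
  shows "distributed std_gauss lborel (\<lambda>x. r * x) (normal_density 0 r)"
proof -
  interpret prob_space std_gauss by simp
  have "distributed std_gauss lborel (\<lambda>x. x) (normal_density 0 1)"
    unfolding distributed_def
  proof (intro conjI)
    have "distr std_gauss lborel (\<lambda>x. x) = distr std_gauss std_gauss (\<lambda>x. x)"
      by (rule distr_cong) auto
    then show "distr std_gauss lborel (\<lambda>x. x) = density lborel (\<lambda>x. ennreal (normal_density 0 1 x))"
      by (simp add: std_gauss_def)
  qed auto
  from normal_density_affine[OF this, of r 0] assms show ?thesis by simp
qed

lemma emeasure_std_gauss_lincomb:
  fixes c :: "'i \<Rightarrow> real"
  assumes K: "finite K" and v: "(\<Sum>l\<in>K. (c l)\<^sup>2) = v" "0 < v" and B: "B \<in> sets borel"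
  shows "emeasure (PiM K (\<lambda>_. std_gauss))
           {w \<in> space (PiM K (\<lambda>_. std_gauss)). (\<Sum>l\<in>K. c l * w l) \<in> B}
       = emeasure std_gauss {x. sqrt v * x \<in> B}"
proof -
  note S = distributed_std_gauss_lincomb[OF assms(1-3)]
  have eq: "distr (PiM K (\<lambda>_. std_gauss)) lborel (\<lambda>w. \<Sum>l\<in>K. c l * w l)
      = distr std_gauss lborel (\<lambda>x. sqrt v * x)"
    using distributed_distr_eq_density[OF S]
      distributed_distr_eq_density[OF distributed_std_gauss_scaled[of "sqrt v"]] v by simp
  have "emeasure (PiM K (\<lambda>_. std_gauss))
          {w \<in> space (PiM K (\<lambda>_. std_gauss)). (\<Sum>l\<in>K. c l * w l) \<in> B}
      = emeasure (distr (PiM K (\<lambda>_. std_gauss)) lborel (\<lambda>w. \<Sum>l\<in>K. c l * w l)) B"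
    using B distributed_measurable[OF S]
    by (subst emeasure_distr) (auto intro: arg_cong2[where f=emeasure])
  also have "\<dots> = emeasure std_gauss {x. sqrt v * x \<in> B}"
    using B by (subst eq, subst emeasure_distr) (auto intro: arg_cong2[where f=emeasure])
  finally show ?thesis .
qed

lemma measurable_std_gauss_lincomb:
  "(\<lambda>w. \<Sum>l\<in>K. c l * w l) \<in> borel_measurable (PiM K (\<lambda>_. std_gauss))"
proof (intro borel_measurable_sum borel_measurable_times borel_measurable_const)
  fix l assume "l \<in> K"
  from measurable_component_singleton[OF this, of "\<lambda>_. std_gauss"]
  show "(\<lambda>w. w l) \<in> borel_measurable (PiM K (\<lambda>_. std_gauss))" by simp
qed

lemma distr_std_gauss_uminus: "distr std_gauss lborel uminus = std_gauss"
proof -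
  interpret prob_space std_gauss by simp
  have "distributed std_gauss lborel (\<lambda>x. - 1 * x) (normal_density 0 1)"
    using distributed_std_gauss_scaled[of 1] normal_density_affine[of "\<lambda>x. 1 * x" 0 1 "-1" 0]
    by simp
  from distributed_distr_eq_density[OF this] show ?thesis
    by (simp add: std_gauss_def)
qed

lemma emeasure_std_gauss_singleton [simp]: "emeasure std_gauss {c} = 0"
proof -
  have "emeasure std_gauss {c} = (\<integral>\<^sup>+x\<in>{c}. ennreal (normal_density 0 1 x) \<partial>lborel)"
    unfolding std_gauss_def by (subst emeasure_density) auto
  also have "\<dots> = 0"
    using AE_lborel_singleton[of c]
    by (intro nn_integral_0_iff_AE[THEN iffD2]) (auto elim!: eventually_mono)
  finally show ?thesis .
qed

lemma measure_std_gauss_pos: "measure std_gauss {x. 0 < x} = 1/2"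
proof -
  interpret prob_space std_gauss by simp
  have "measure std_gauss {x. x < 0} = measure std_gauss (uminus -` {x. 0 < x} \<inter> space std_gauss)"
    by (auto intro: arg_cong2[where f=measure])
  also have "\<dots> = measure (distr std_gauss lborel uminus) {x. 0 < x}"
    by (subst measure_distr) auto
  also have "\<dots> = measure std_gauss {x. 0 < x}"
    by (simp add: distr_std_gauss_uminus)
  finally have sym: "measure std_gauss {x. x < 0} = measure std_gauss {x. 0 < x}" .
  have "measure std_gauss ({x. x < 0} \<union> {0} \<union> {x. 0 < x})
      = measure std_gauss {x. x < 0} + measure std_gauss {0} + measure std_gauss {x. 0 < x}"
    by (subst finite_measure_Union, simp, simp, force, subst finite_measure_Union) auto
  moreover have "{x::real. x < 0} \<union> {0} \<union> {x. 0 < x} = UNIV" by auto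
  ultimately show ?thesis
    using sym prob_space by (simp add: measure_def)
qed

\<comment> \<open>The trivial bound by 1, written as twice the probability that a centred normal is positive.\<close>
lemma emeasure_le_twice_std_gauss_pos:
  assumes "prob_space P" "0 < r"
  shows "emeasure P A \<le> 2 * emeasure std_gauss {x. 0 < r * x}"
proof -
  interpret P: prob_space P by fact
  interpret G: prob_space std_gauss by simp
  have "measure std_gauss {x. 0 < r * x} = 1/2"
    using measure_std_gauss_pos assms(2) by (simp add: zero_less_mult_iff)
  then have "2 * emeasure std_gauss {x. 0 < r * x} = 1"
    by (simp add: G.emeasure_eq_measure flip: ennreal_numeral ennreal_mult)
  then show ?thesis
    using P.emeasure_le_1 by simp
qed

lemma emeasure_std_gauss_gt_scale_mono:
  assumes "0 \<le> t" "0 < r1" "r1 < r2"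
  shows "emeasure std_gauss {x. t < r1 * x} \<le> emeasure std_gauss {x. t < r2 * x}"
proof (rule emeasure_mono)
  show "{x. t < r1 * x} \<subseteq> {x. t < r2 * x}"
  proof
    fix x assume "x \<in> {x. t < r1 * x}"
    then have "t < r1 * x" by simp
    then have "0 < r1 * x" using assms by linarith
    then have "0 < x" using assms by (simp add: zero_less_mult_iff)
    then have "r1 * x < r2 * x" using assms by simp
    then show "x \<in> {x. t < r2 * x}" using \<open>t < r1 * x\<close> by simp
  qed
qed simp

lemma emeasure_std_gauss_ge_le_gt_scale:
  assumes "0 < t" "0 < r1" "r1 < r2"
  shows "emeasure std_gauss {x. t \<le> r1 * x} \<le> emeasure std_gauss {x. t < r2 * x}"
proof (rule emeasure_mono)
  show "{x. t \<le> r1 * x} \<subseteq> {x. t < r2 * x}"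
  proof
    fix x assume "x \<in> {x. t \<le> r1 * x}"
    then have "t \<le> r1 * x" by simp
    then have "0 < r1 * x" using assms by linarith
    then have "0 < x" using assms by (simp add: zero_less_mult_iff)
    then have "r1 * x < r2 * x" using assms by simp
    then show "x \<in> {x. t < r2 * x}" using \<open>t \<le> r1 * x\<close> by simp
  qed
qed simp

context
  fixes K :: "'i set" and c :: "'i \<Rightarrow> real" and v r :: real
  assumes K: "finite K" and v: "(\<Sum>l\<in>K. (c l)\<^sup>2) = v" "0 < v" and v_lt: "sqrt v < r"
begin

lemma emeasure_abs_std_gauss_lincomb_le:
  assumes B: "B \<in> sets borel"
  shows "emeasure (PiM K (\<lambda>_. std_gauss))
           {w \<in> space (PiM K (\<lambda>_. std_gauss)). \<bar>\<Sum>l\<in>K. c l * w l\<bar> \<in> B}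
       \<le> 2 * emeasure std_gauss {x. sqrt v * x \<in> B}"
proof -
  let ?P = "PiM K (\<lambda>_. std_gauss)"
  let ?pos = "{w \<in> space ?P. (\<Sum>l\<in>K. c l * w l) \<in> B}"
  let ?neg = "{w \<in> space ?P. (\<Sum>l\<in>K. - c l * w l) \<in> B}"
  have sets: "{w \<in> space ?P. (\<Sum>l\<in>K. c' l * w l) \<in> B} \<in> sets ?P" for c'
  proof -
    have "{w \<in> space ?P. (\<Sum>l\<in>K. c' l * w l) \<in> B} = (\<lambda>w. \<Sum>l\<in>K. c' l * w l) -` B \<inter> space ?P"
      by auto
    then show ?thesis
      using measurable_sets[OF measurable_std_gauss_lincomb B] by simp
  qed
  have "{w \<in> space ?P. \<bar>\<Sum>l\<in>K. c l * w l\<bar> \<in> B} \<subseteq> ?pos \<union> ?neg"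
    by (auto simp: sum_negf abs_real_def)
  then have "emeasure ?P {w \<in> space ?P. \<bar>\<Sum>l\<in>K. c l * w l\<bar> \<in> B} \<le> emeasure ?P (?pos \<union> ?neg)"
    using sets[of c] sets[of "\<lambda>l. - c l"] by (intro emeasure_mono) auto
  also have "\<dots> \<le> emeasure ?P ?pos + emeasure ?P ?neg"
    using sets[of c] sets[of "\<lambda>l. - c l"] by (rule emeasure_subadditive)
  also have "\<dots> = 2 * emeasure std_gauss {x. sqrt v * x \<in> B}"
    using emeasure_std_gauss_lincomb[OF K v B] emeasure_std_gauss_lincomb[OF K _ v(2) B, of "\<lambda>l. - c l"] v
    by (simp add: mult_2)
  finally show ?thesis .
qed

lemma emeasure_abs_std_gauss_lincomb_gt_le:
  assumes "0 \<le> T"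
  shows "emeasure (PiM K (\<lambda>_. std_gauss))
           {w \<in> space (PiM K (\<lambda>_. std_gauss)). T < \<bar>\<Sum>l\<in>K. c l * w l\<bar>}
       \<le> 2 * emeasure std_gauss {x. T < r * x}"
proof -
  have "0 < sqrt v" using v(2) by simp
  have "emeasure (PiM K (\<lambda>_. std_gauss))
          {w \<in> space (PiM K (\<lambda>_. std_gauss)). T < \<bar>\<Sum>l\<in>K. c l * w l\<bar>}
      \<le> 2 * emeasure std_gauss {x. sqrt v * x \<in> {T<..}}"
    using emeasure_abs_std_gauss_lincomb_le[of "{T<..}"] by simp
  also have "\<dots> \<le> 2 * emeasure std_gauss {x. T < r * x}"
    using emeasure_std_gauss_gt_scale_mono[OF assms \<open>0 < sqrt v\<close> v_lt] by (simp add: mult_left_mono)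
  finally show ?thesis .
qed

lemma emeasure_shifted_std_gauss_lincomb_le_le:
  assumes "T + c0 \<le> \<bar>m\<bar>"
  shows "emeasure (PiM K (\<lambda>_. std_gauss))
           {w \<in> space (PiM K (\<lambda>_. std_gauss)). \<not> T < \<bar>m + (\<Sum>l\<in>K. c l * w l)\<bar>}
       \<le> 2 * emeasure std_gauss {x. max 0 c0 < r * x}"
proof (cases "c0 \<le> 0")
  case True
  have "0 < r" using v v_lt real_sqrt_gt_zero[of v] by linarith
  with True show ?thesis
    by (simp add: emeasure_le_twice_std_gauss_pos)
next
  case False
  let ?P = "PiM K (\<lambda>_. std_gauss)"
  have "emeasure ?P {w \<in> space ?P. \<not> T < \<bar>m + (\<Sum>l\<in>K. c l * w l)\<bar>}
      \<le> emeasure ?P {w \<in> space ?P. \<bar>\<Sum>l\<in>K. c l * w l\<bar> \<in> {c0..}}"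
  proof (rule emeasure_mono)
    show "{w \<in> space ?P. \<bar>\<Sum>l\<in>K. c l * w l\<bar> \<in> {c0..}} \<in> sets ?P"
    proof -
      have "{w \<in> space ?P. \<bar>\<Sum>l\<in>K. c l * w l\<bar> \<in> {c0..}}
          = (\<lambda>w. \<Sum>l\<in>K. c l * w l) -` {x. c0 \<le> \<bar>x\<bar>} \<inter> space ?P"
        by auto
      then show ?thesis
        using measurable_sets[OF measurable_std_gauss_lincomb[of c K], of "{x. c0 \<le> \<bar>x\<bar>}"] by simp
    qed
    show "{w \<in> space ?P. \<not> T < \<bar>m + (\<Sum>l\<in>K. c l * w l)\<bar>}
        \<subseteq> {w \<in> space ?P. \<bar>\<Sum>l\<in>K. c l * w l\<bar> \<in> {c0..}}"
    proof
      fix w assume w: "w \<in> {w \<in> space ?P. \<not> T < \<bar>m + (\<Sum>l\<in>K. c l * w l)\<bar>}"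
      have "\<bar>m\<bar> \<le> \<bar>m + (\<Sum>l\<in>K. c l * w l)\<bar> + \<bar>\<Sum>l\<in>K. c l * w l\<bar>"
        using abs_triangle_ineq[of "m + (\<Sum>l\<in>K. c l * w l)" "- (\<Sum>l\<in>K. c l * w l)"] by simp
      with w assms show "w \<in> {w \<in> space ?P. \<bar>\<Sum>l\<in>K. c l * w l\<bar> \<in> {c0..}}"
        by simp
    qed
  qed
  also have "\<dots> \<le> 2 * emeasure std_gauss {x. sqrt v * x \<in> {c0..}}"
    by (rule emeasure_abs_std_gauss_lincomb_le) simp
  also have "\<dots> \<le> 2 * emeasure std_gauss {x. max 0 c0 < r * x}"
    using emeasure_std_gauss_ge_le_gt_scale[of c0 "sqrt v" r] False v v_lt
    by (intro mult_left_mono) auto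
  finally show ?thesis .
qed

end

section \<open>The sample space as a product of coordinates\<close>

\<comment> \<open>The data space re-indexed as a single product of independent standard normals, one for
  each design entry (Inl (k, j)) and each noise entry (Inr k), so that arbitrary groups of
  coordinates can be integrated out separately.\<close>

definition coords :: "nat \<Rightarrow> nat \<Rightarrow> ((nat \<times> nat) + nat) set" where
  "coords n p = Inl ` ({..<n} \<times> {..<p}) \<union> Inr ` {..<n}"

definition coord_space :: "nat \<Rightarrow> nat \<Rightarrow> ((nat \<times> nat) + nat \<Rightarrow> real) measure" where
  "coord_space n p = PiM (coords n p) (\<lambda>_. std_gauss)"

definition assemble :: "nat \<Rightarrow> nat \<Rightarrow> ((nat \<times> nat) + nat \<Rightarrow> real) \<Rightarrow> (nat \<Rightarrow> nat \<Rightarrow> real) \<times> (nat \<Rightarrow> real)" where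
  "assemble n p z = ((\<lambda>k\<in>{..<n}. \<lambda>j\<in>{..<p}. z (Inl (k,j))), (\<lambda>k\<in>{..<n}. z (Inr k)))"

definition flatten :: "nat \<Rightarrow> nat \<Rightarrow> (nat \<Rightarrow> nat \<Rightarrow> real) \<times> (nat \<Rightarrow> real) \<Rightarrow> ((nat \<times> nat) + nat \<Rightarrow> real)" where
  "flatten n p \<omega> = (\<lambda>l\<in>coords n p. case l of Inl (k,j) \<Rightarrow> fst \<omega> k j | Inr k \<Rightarrow> snd \<omega> k)"

lemma finite_coords [simp]: "finite (coords n p)"
  by (simp add: coords_def)

lemma measurable_design_entry: "(\<lambda>\<omega>. fst \<omega> k j) \<in> borel_measurable (data_space n p)"
proof (cases "k < n \<and> j < p")
  case True
  have "(\<lambda>x. x k) \<in> measurable (PiM {..<n} (\<lambda>_. gauss_vec p)) (gauss_vec p)"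
    using True by (intro measurable_component_singleton) auto
  moreover have "(\<lambda>y. y j) \<in> measurable (gauss_vec p) std_gauss"
    using True unfolding gauss_vec_def by (intro measurable_component_singleton) auto
  ultimately show ?thesis
    unfolding data_space_def by (simp add: measurable_compose[OF measurable_fst] measurable_compose)
next
  case False
  then have "fst \<omega> k j = (if k < n then undefined else (undefined :: nat \<Rightarrow> real) j)"
    if "\<omega> \<in> space (data_space n p)" for \<omega>
    using that unfolding data_space_def gauss_vec_def
    by (auto simp: space_pair_measure space_PiM PiE_iff extensional_def)
  then show ?thesis by (simp cong: measurable_cong)
qed

lemma measurable_noise_entry: "(\<lambda>\<omega>. snd \<omega> k) \<in> borel_measurable (data_space n p)"
proof (cases "k < n")
  case True
  then have "(\<lambda>x. x k) \<in> measurable (gauss_vec n) std_gauss"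
    unfolding gauss_vec_def by (intro measurable_component_singleton) auto
  then show ?thesis
    unfolding data_space_def by (simp add: measurable_compose[OF measurable_snd])
next
  case False
  then have "snd \<omega> k = undefined" if "\<omega> \<in> space (data_space n p)" for \<omega>
    using that unfolding data_space_def gauss_vec_def
    by (auto simp: space_pair_measure space_PiM PiE_iff extensional_def)
  then show ?thesis by (simp cong: measurable_cong)
qed

lemma measurable_assemble: "assemble n p \<in> measurable (coord_space n p) (data_space n p)"
  unfolding assemble_def coord_space_def data_space_def gauss_vec_def
  by (intro measurable_Pair measurable_restrict measurable_component_singleton)
    (auto simp: coords_def)

lemma measurable_flatten: "flatten n p \<in> measurable (data_space n p) (coord_space n p)"
  unfolding flatten_def coord_space_def
proof (intro measurable_restrict)
  fix l :: "(nat \<times> nat) + nat"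
  show "(\<lambda>\<omega>. case l of Inl (k, j) \<Rightarrow> fst \<omega> k j | Inr k \<Rightarrow> snd \<omega> k) \<in> measurable (data_space n p) std_gauss"
    by (cases l) (auto simp: measurable_design_entry measurable_noise_entry)
qed

lemma assemble_flatten: "\<omega> \<in> space (data_space n p) \<Longrightarrow> assemble n p (flatten n p \<omega>) = \<omega>"
  unfolding assemble_def flatten_def data_space_def gauss_vec_def
  by (cases \<omega>) (auto simp: space_pair_measure space_PiM PiE_iff coords_def extensional_def fun_eq_iff)

lemma prod_coords:
  "(\<Prod>l\<in>coords n p. f l) = (\<Prod>k<n. \<Prod>j<p. f (Inl (k,j))) * (\<Prod>k<n. f (Inr k))"
proof -
  have "(\<Prod>l\<in>coords n p. f l) = (\<Prod>l\<in>Inl ` ({..<n} \<times> {..<p}). f l) * (\<Prod>l\<in>Inr ` {..<n}. f l)"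
    unfolding coords_def by (rule prod.union_disjoint) auto
  also have "(\<Prod>l\<in>Inl ` ({..<n} \<times> {..<p}). f l) = (\<Prod>k<n. \<Prod>j<p. f (Inl (k,j)))"
    by (subst prod.reindex) (auto simp: prod.cartesian_product case_prod_beta')
  also have "(\<Prod>l\<in>Inr ` {..<n}. f l) = (\<Prod>k<n. f (Inr k))"
    by (subst prod.reindex) auto
  finally show ?thesis .
qed

lemma flatten_vimage_PiE:
  "flatten n p -` PiE (coords n p) A \<inter> space (data_space n p)
     = PiE {..<n} (\<lambda>k. PiE {..<p} (\<lambda>j. A (Inl (k,j)))) \<times> PiE {..<n} (\<lambda>k. A (Inr k))"
proof (intro set_eqI iffI)
  fix \<omega> assume \<omega>: "\<omega> \<in> flatten n p -` PiE (coords n p) A \<inter> space (data_space n p)"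
  obtain R \<xi> where [simp]: "\<omega> = (R, \<xi>)" by fastforce
  have "R \<in> PiE {..<n} (\<lambda>_. PiE {..<p} (\<lambda>_. UNIV))" "\<xi> \<in> PiE {..<n} (\<lambda>_. UNIV)"
    using \<omega> unfolding data_space_def gauss_vec_def by (auto simp: space_pair_measure space_PiM)
  moreover have "flatten n p \<omega> l \<in> A l" if "l \<in> coords n p" for l
    using \<omega> that by (auto simp: PiE_iff)
  then have "R k j \<in> A (Inl (k,j))" "\<xi> k \<in> A (Inr k)" if "k < n" "j < p" for k j
    using that by (force simp: flatten_def coords_def)+
  moreover have "\<xi> k \<in> A (Inr k)" if "k < n" for k
    using \<open>\<And>l. l \<in> coords n p \<Longrightarrow> flatten n p \<omega> l \<in> A l\<close>[of "Inr k"] that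
    by (auto simp: flatten_def coords_def)
  ultimately show "\<omega> \<in> PiE {..<n} (\<lambda>k. PiE {..<p} (\<lambda>j. A (Inl (k,j)))) \<times> PiE {..<n} (\<lambda>k. A (Inr k))"
    by (auto simp: PiE_iff)
next
  fix \<omega> assume \<omega>: "\<omega> \<in> PiE {..<n} (\<lambda>k. PiE {..<p} (\<lambda>j. A (Inl (k,j)))) \<times> PiE {..<n} (\<lambda>k. A (Inr k))"
  obtain R \<xi> where [simp]: "\<omega> = (R, \<xi>)" by fastforce
  from \<omega> show "\<omega> \<in> flatten n p -` PiE (coords n p) A \<inter> space (data_space n p)"
    unfolding data_space_def gauss_vec_def flatten_def
    by (auto simp: space_pair_measure space_PiM PiE_iff coords_def)
qed

lemma distr_flatten: "distr (data_space n p) (coord_space n p) (flatten n p) = coord_space n p"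
proof -
  interpret P: product_prob_space "\<lambda>_::(nat\<times>nat)+nat. std_gauss" "coords n p"
    by (rule product_prob_space_const) simp
  interpret R: product_prob_space "\<lambda>_::nat. PiM {..<p} (\<lambda>_::nat. std_gauss)" "{..<n}"
    by (rule product_prob_space_const) simp
  interpret S: product_prob_space "\<lambda>_::nat. std_gauss" "{..<n}"
    by (rule product_prob_space_const) simp
  show ?thesis unfolding coord_space_def
  proof (rule P.PiM_eqI)
    fix A assume A: "\<And>l. l \<in> coords n p \<Longrightarrow> A l \<in> sets std_gauss"
    let ?B1 = "PiE {..<n} (\<lambda>k. PiE {..<p} (\<lambda>j. A (Inl (k,j))))"
    let ?B2 = "PiE {..<n} (\<lambda>k. A (Inr k))"
    have A1: "\<And>k j. k < n \<Longrightarrow> j < p \<Longrightarrow> A (Inl (k,j)) \<in> sets std_gauss"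
      by (rule A) (auto simp: coords_def)
    have A2: "\<And>k. k < n \<Longrightarrow> A (Inr k) \<in> sets std_gauss"
      by (rule A) (auto simp: coords_def)
    have B1: "?B1 \<in> sets (PiM {..<n} (\<lambda>_. PiM {..<p} (\<lambda>_. std_gauss)))"
      using A1 by (intro sets_PiM_I_finite) (auto intro!: sets_PiM_I_finite)
    have B2: "?B2 \<in> sets (PiM {..<n} (\<lambda>_. std_gauss))"
      using A2 by (intro sets_PiM_I_finite) auto
    have "emeasure (distr (data_space n p) (PiM (coords n p) (\<lambda>_. std_gauss)) (flatten n p)) (PiE (coords n p) A)
        = emeasure (data_space n p) (?B1 \<times> ?B2)"
      using A measurable_flatten[of n p] unfolding coord_space_def
      by (subst emeasure_distr) (auto simp: flatten_vimage_PiE intro!: sets_PiM_I_finite)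
    also have "\<dots> = emeasure (PiM {..<n} (\<lambda>_. PiM {..<p} (\<lambda>_. std_gauss))) ?B1
                     * emeasure (PiM {..<n} (\<lambda>_. std_gauss)) ?B2"
      unfolding data_space_def gauss_vec_def using B1 B2
      by (rule sigma_finite_measure.emeasure_pair_measure_Times[OF prob_space_imp_sigma_finite[OF prob_space_PiM_std_gauss]])
    also have "emeasure (PiM {..<n} (\<lambda>_. PiM {..<p} (\<lambda>_. std_gauss))) ?B1
        = (\<Prod>k<n. \<Prod>j<p. emeasure std_gauss (A (Inl (k,j))))"
    proof -
      have "emeasure (PiM {..<p} (\<lambda>_. std_gauss)) (PiE {..<p} (\<lambda>j. A (Inl (k,j))))
          = (\<Prod>j<p. emeasure std_gauss (A (Inl (k,j))))" if "k < n" for k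
        using A1 that by (subst S.emeasure_PiM) auto
      then show ?thesis
        using A1 by (subst R.emeasure_PiM) (auto intro!: prod.cong sets_PiM_I_finite)
    qed
    also have "emeasure (PiM {..<n} (\<lambda>_. std_gauss)) ?B2 = (\<Prod>k<n. emeasure std_gauss (A (Inr k)))"
      using A2 by (subst S.emeasure_PiM) auto
    finally show "emeasure (distr (data_space n p) (PiM (coords n p) (\<lambda>_. std_gauss)) (flatten n p)) (PiE (coords n p) A)
        = (\<Prod>l\<in>coords n p. emeasure std_gauss (A l))"
      by (simp add: prod_coords)
  qed simp_all
qed

lemma distr_assemble: "distr (coord_space n p) (data_space n p) (assemble n p) = data_space n p"
proof (rule measure_eqI)
  fix E assume "E \<in> sets (distr (coord_space n p) (data_space n p) (assemble n p))"
  then have E: "E \<in> sets (data_space n p)" by simp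
  have "emeasure (distr (coord_space n p) (data_space n p) (assemble n p)) E
      = emeasure (distr (data_space n p) (coord_space n p) (flatten n p))
          (assemble n p -` E \<inter> space (coord_space n p))"
    by (simp add: emeasure_distr[OF measurable_assemble E] distr_flatten)
  also have "\<dots> = emeasure (data_space n p)
      (flatten n p -` (assemble n p -` E \<inter> space (coord_space n p)) \<inter> space (data_space n p))"
    using E measurable_assemble measurable_flatten by (intro emeasure_distr) (auto intro: measurable_sets)
  also have "flatten n p -` (assemble n p -` E \<inter> space (coord_space n p)) \<inter> space (data_space n p) = E"
    using sets.sets_into_space[OF E] measurable_space[OF measurable_flatten] assemble_flatten by auto
  finally show "emeasure (distr (coord_space n p) (data_space n p) (assemble n p)) E = emeasure (data_space n p) E" .
qed simp

definition nuisance_coords :: "nat \<Rightarrow> nat \<Rightarrow> nat \<Rightarrow> nat \<Rightarrow> ((nat \<times> nat) + nat) set" where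
  "nuisance_coords n1 n2 p i =
     Inl ` ((\<lambda>(k,j). (n1+k, j)) ` ({..<n2} \<times> ({..<p} - {i}))) \<union> Inr ` ((\<lambda>k. n1+k) ` {..<n2})"

definition conditioning_coords :: "nat \<Rightarrow> nat \<Rightarrow> nat \<Rightarrow> nat \<Rightarrow> ((nat \<times> nat) + nat) set" where
  "conditioning_coords n1 n2 p i = coords (n1+n2) p - nuisance_coords n1 n2 p i"

definition glue :: "nat \<Rightarrow> nat \<Rightarrow> nat \<Rightarrow> nat \<Rightarrow> ((nat \<times> nat) + nat \<Rightarrow> real) \<Rightarrow> ((nat \<times> nat) + nat \<Rightarrow> real)
    \<Rightarrow> (nat \<Rightarrow> nat \<Rightarrow> real) \<times> (nat \<Rightarrow> real)" where
  "glue n1 n2 p i x w =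
     assemble (n1+n2) p (merge (conditioning_coords n1 n2 p i) (nuisance_coords n1 n2 p i) (x, w))"

lemma finite_nuisance_coords [simp]: "finite (nuisance_coords n1 n2 p i)"
  by (simp add: nuisance_coords_def)

lemma finite_conditioning_coords [simp]: "finite (conditioning_coords n1 n2 p i)"
  by (simp add: conditioning_coords_def)

lemma coords_eq_conditioning_Un_nuisance:
  "coords (n1+n2) p = conditioning_coords n1 n2 p i \<union> nuisance_coords n1 n2 p i"
  by (auto simp: conditioning_coords_def nuisance_coords_def coords_def)

lemma conditioning_Int_nuisance_coords:
  "conditioning_coords n1 n2 p i \<inter> nuisance_coords n1 n2 p i = {}"
  by (auto simp: conditioning_coords_def)

lemma conditioning_coords_memI [simp]:
  shows "k < n1 \<Longrightarrow> j < p \<Longrightarrow> Inl (k,j) \<in> conditioning_coords n1 n2 p i"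
    and "k < n1 \<Longrightarrow> Inr k \<in> conditioning_coords n1 n2 p i"
    and "i < p \<Longrightarrow> k < n2 \<Longrightarrow> Inl (n1+k, i) \<in> conditioning_coords n1 n2 p i"
  by (auto simp: conditioning_coords_def nuisance_coords_def coords_def image_iff)

lemma nuisance_coords_memI [simp]:
  shows "k < n2 \<Longrightarrow> j < p \<Longrightarrow> j \<noteq> i \<Longrightarrow> Inl (n1+k, j) \<in> nuisance_coords n1 n2 p i"
    and "k < n2 \<Longrightarrow> Inr (n1+k) \<in> nuisance_coords n1 n2 p i"
  by (auto simp: nuisance_coords_def image_iff)

lemma nuisance_coords_not_conditioning:
  "l \<in> nuisance_coords n1 n2 p i \<Longrightarrow> l \<notin> conditioning_coords n1 n2 p i"
  by (simp add: conditioning_coords_def)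

lemma sum_nuisance_coords:
  "(\<Sum>l\<in>nuisance_coords n1 n2 p i. g l)
     = (\<Sum>k<n2. (\<Sum>j\<in>{..<p}-{i}. g (Inl (n1+k,j))) + g (Inr (n1+k)))"
proof -
  have "(\<Sum>l\<in>nuisance_coords n1 n2 p i. g l)
      = (\<Sum>l\<in>Inl ` ((\<lambda>(k,j). (n1+k, j)) ` ({..<n2} \<times> ({..<p}-{i}))). g l)
        + (\<Sum>l\<in>Inr ` ((\<lambda>k. n1+k) ` {..<n2}). g l)"
    unfolding nuisance_coords_def by (rule sum.union_disjoint) auto
  also have "(\<Sum>l\<in>Inl ` ((\<lambda>(k,j). (n1+k, j)) ` ({..<n2} \<times> ({..<p}-{i}))). g l)
      = (\<Sum>k<n2. \<Sum>j\<in>{..<p}-{i}. g (Inl (n1+k,j)))"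
    by (subst sum.reindex, simp, subst sum.reindex)
      (auto simp: inj_on_def case_prod_beta sum.cartesian_product)
  also have "(\<Sum>l\<in>Inr ` ((\<lambda>k. n1+k) ` {..<n2}). g l) = (\<Sum>k<n2. g (Inr (n1+k)))"
    by (subst sum.reindex, simp, subst sum.reindex) (auto simp: inj_on_def)
  finally show ?thesis by (simp add: sum.distrib)
qed

lemma X1_glue:
  "X1 n1 p (glue n1 n2 p i x w) = (\<lambda>k j. if k < n1 \<and> j < p then x (Inl (k,j)) else 0)"
  by (auto simp: X1_def glue_def assemble_def fun_eq_iff merge_def)

lemma Y1_glue:
  "Y1 n1 p \<sigma> \<beta> (glue n1 n2 p i x w)
     = (\<lambda>k. if k < n1 then (\<Sum>j<p. x (Inl (k,j)) * \<beta> j) + \<sigma> * x (Inr k) else 0)"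
  by (auto simp: Y1_def Yobs_def glue_def assemble_def fun_eq_iff merge_def intro!: sum.cong)

lemma X2_glue:
  "i < p \<Longrightarrow> k < n2 \<Longrightarrow> j < p \<Longrightarrow> X2 n1 (glue n1 n2 p i x w) k j
     = (if j = i then x (Inl (n1+k, i)) else w (Inl (n1+k, j)))"
  by (auto simp: X2_def glue_def assemble_def merge_def nuisance_coords_not_conditioning)

lemma Y2_glue:
  "k < n2 \<Longrightarrow> Y2 n1 p \<sigma> \<beta> (glue n1 n2 p i x w) k
     = (\<Sum>j<p. X2 n1 (glue n1 n2 p i x w) k j * \<beta> j) + \<sigma> * w (Inr (n1+k))"
  by (auto simp: Y2_def X2_def Yobs_def glue_def assemble_def merge_def nuisance_coords_not_conditioning)

lemma emeasure_data_space_conditional: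
  assumes G: "Measurable.pred (data_space (n1+n2) p) G"
  shows "emeasure (data_space (n1+n2) p) {\<omega> \<in> space (data_space (n1+n2) p). G \<omega>}
       = (\<integral>\<^sup>+x. emeasure (PiM (nuisance_coords n1 n2 p i) (\<lambda>_. std_gauss))
              {w \<in> space (PiM (nuisance_coords n1 n2 p i) (\<lambda>_. std_gauss)). G (glue n1 n2 p i x w)}
            \<partial>PiM (conditioning_coords n1 n2 p i) (\<lambda>_. std_gauss))"
proof -
  let ?n = "n1 + n2"
  let ?A = "conditioning_coords n1 n2 p i"
  let ?B = "nuisance_coords n1 n2 p i"
  let ?Q = "coord_space ?n p"
  let ?S = "{z \<in> space ?Q. G (assemble ?n p z)}"
  interpret P: product_prob_space "\<lambda>_::(nat\<times>nat)+nat. std_gauss" "coords ?n p"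
    by (rule product_prob_space_const) simp
  have QG: "Measurable.pred ?Q (\<lambda>z. G (assemble ?n p z))"
    by (rule measurable_compose[OF measurable_assemble G])
  have "emeasure (data_space ?n p) {\<omega> \<in> space (data_space ?n p). G \<omega>}
      = emeasure (distr ?Q (data_space ?n p) (assemble ?n p)) {\<omega> \<in> space (data_space ?n p). G \<omega>}"
    by (simp add: distr_assemble)
  also have "\<dots> = emeasure ?Q ?S"
    using measurable_space[OF measurable_assemble]
    by (subst emeasure_distr[OF measurable_assemble predE[OF G]]) (auto intro: arg_cong2[where f=emeasure])
  also have "\<dots> = (\<integral>\<^sup>+z. indicator ?S z \<partial>?Q)"
    using predE[OF QG] by simp
  also have "\<dots> = (\<integral>\<^sup>+x. (\<integral>\<^sup>+w. indicator ?S (merge ?A ?B (x, w)) \<partial>PiM ?B (\<lambda>_. std_gauss))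
                    \<partial>PiM ?A (\<lambda>_. std_gauss))"
    unfolding coord_space_def coords_eq_conditioning_Un_nuisance[of n1 n2 p i]
    using conditioning_Int_nuisance_coords predE[OF QG]
    by (intro P.product_nn_integral_fold)
      (auto simp: coord_space_def coords_eq_conditioning_Un_nuisance[of n1 n2 p i])
  also have "\<dots> = (\<integral>\<^sup>+x. emeasure (PiM ?B (\<lambda>_. std_gauss))
                    {w \<in> space (PiM ?B (\<lambda>_. std_gauss)). G (glue n1 n2 p i x w)} \<partial>PiM ?A (\<lambda>_. std_gauss))"
  proof (rule nn_integral_cong)
    fix x assume x: "x \<in> space (PiM ?A (\<lambda>_. std_gauss))"
    have merge: "(\<lambda>w. merge ?A ?B (x, w)) \<in> measurable (PiM ?B (\<lambda>_. std_gauss)) ?Q"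
      unfolding coord_space_def coords_eq_conditioning_Un_nuisance[of n1 n2 p i]
      by (rule measurable_compose[OF measurable_Pair1'[OF x] measurable_merge])
    let ?W = "{w \<in> space (PiM ?B (\<lambda>_. std_gauss)). G (glue n1 n2 p i x w)}"
    have "?W \<in> sets (PiM ?B (\<lambda>_. std_gauss))"
      unfolding glue_def by (rule predE[OF measurable_compose[OF merge QG]])
    have "(\<integral>\<^sup>+w. indicator ?S (merge ?A ?B (x, w)) \<partial>PiM ?B (\<lambda>_. std_gauss))
        = (\<integral>\<^sup>+w. indicator ?W w \<partial>PiM ?B (\<lambda>_. std_gauss))"
      using measurable_space[OF merge]
      by (intro nn_integral_cong) (auto simp: indicator_def glue_def)
    also have "\<dots> = emeasure (PiM ?B (\<lambda>_. std_gauss)) ?W"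
      using \<open>?W \<in> sets (PiM ?B (\<lambda>_. std_gauss))\<close> by simp
    finally show "(\<integral>\<^sup>+w. indicator ?S (merge ?A ?B (x, w)) \<partial>PiM ?B (\<lambda>_. std_gauss))
        = emeasure (PiM ?B (\<lambda>_. std_gauss)) ?W" .
  qed
  finally show ?thesis .
qed

lemma nn_integral_column:
  assumes "i < p" and f: "f \<in> borel_measurable (gauss_vec n2)"
  shows "(\<integral>\<^sup>+x. f (\<lambda>k\<in>{..<n2}. x (Inl (n1+k,i))) \<partial>PiM (conditioning_coords n1 n2 p i) (\<lambda>_. std_gauss))
       = (\<integral>\<^sup>+\<zeta>. f \<zeta> \<partial>gauss_vec n2)"
proof -
  let ?A = "conditioning_coords n1 n2 p i"
  let ?col = "\<lambda>x. \<lambda>k\<in>{..<n2}. x (Inl (n1+k,i))"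
  have distr: "distr (PiM ?A (\<lambda>_. std_gauss)) (PiM {..<n2} (\<lambda>_. std_gauss)) ?col = gauss_vec n2"
    using distr_PiM_reindex[of ?A "\<lambda>_. std_gauss" "\<lambda>k. Inl (n1+k,i)" "{..<n2}"] assms(1)
    by (auto simp: inj_on_def gauss_vec_def)
  have col: "?col \<in> measurable (PiM ?A (\<lambda>_. std_gauss)) (PiM {..<n2} (\<lambda>_. std_gauss))"
    using assms(1) by (intro measurable_restrict measurable_component_singleton) auto
  have "f \<in> borel_measurable (distr (PiM ?A (\<lambda>_. std_gauss)) (PiM {..<n2} (\<lambda>_. std_gauss)) ?col)"
    using f by (simp only: distr)
  from nn_integral_distr[OF col this] show ?thesis
    by (simp only: distr)
qed

lemma measurable_emeasure_std_gauss_gt: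
  assumes "g \<in> borel_measurable M"
  shows "(\<lambda>\<zeta>. emeasure std_gauss {e. g \<zeta> < r * e}) \<in> borel_measurable M"
proof (rule sigma_finite_measure.measurable_emeasure)
  show "{x \<in> space (M \<Otimes>\<^sub>M std_gauss). snd x \<in> {e. g (fst x) < r * e}} \<in> sets (M \<Otimes>\<^sub>M std_gauss)"
    using assms by measurable
qed (simp_all add: prob_space_imp_sigma_finite)

lemma nn_integral_emeasure_std_gauss_gt:
  assumes g: "g \<in> borel_measurable (gauss_vec n)"
  shows "(\<integral>\<^sup>+\<zeta>. emeasure std_gauss {e. g \<zeta> < r * e} \<partial>gauss_vec n)
       = emeasure (std_gauss \<Otimes>\<^sub>M gauss_vec n) {x \<in> space (std_gauss \<Otimes>\<^sub>M gauss_vec n). g (snd x) < r * fst x}"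
proof -
  interpret pair_sigma_finite std_gauss "gauss_vec n"
    by (intro pair_sigma_finite.intro prob_space_imp_sigma_finite) simp_all
  have "Measurable.pred (std_gauss \<Otimes>\<^sub>M gauss_vec n) (\<lambda>x. g (snd x) < r * fst x)"
    using g by measurable
  from emeasure_pair_measure_alt2[OF predE[OF this]] show ?thesis
    by (auto intro!: nn_integral_cong arg_cong2[where f=emeasure] simp: space_pair_measure)
qed

section \<open>Thresholds and the function psi\<close>

lemma vnorm_restrict [simp]: "vnorm n (\<lambda>k\<in>{..<n}. u k) = vnorm n u"
  by (simp add: vnorm_def)

lemma vnorm_nonneg: "0 \<le> vnorm n u"
  by (simp add: vnorm_def sum_nonneg)

lemma measurable_vnorm [measurable]: "vnorm m \<in> borel_measurable (gauss_vec m)"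
proof -
  have "(\<lambda>\<zeta>. \<Sum>k<m. (\<zeta> k)\<^sup>2) \<in> borel_measurable (PiM {..<m} (\<lambda>_. std_gauss))"
  proof (rule borel_measurable_sum)
    fix k assume "k \<in> {..<m}"
    then have "(\<lambda>\<zeta>. \<zeta> k) \<in> measurable (PiM {..<m} (\<lambda>_. std_gauss)) std_gauss"
      by (intro measurable_component_singleton) auto
    then show "(\<lambda>\<zeta>. (\<zeta> k)\<^sup>2) \<in> borel_measurable (PiM {..<m} (\<lambda>_. std_gauss))" by simp
  qed
  note this[measurable]
  show ?thesis unfolding vnorm_def[abs_def] gauss_vec_def by measurable
qed

lemma ln_ratio_nonneg:
  assumes "1 \<le> s" "real s \<le> real p / 2"
  shows "0 \<le> ln (real p / real s - 1)"
proof -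
  have "2 \<le> real p / real s" using assms by (simp add: field_simps)
  then show ?thesis by simp
qed

context
  fixes a :: real and p s :: nat
  assumes a_pos: "0 < a" and ln_nonneg: "0 \<le> ln (real p / real s - 1)"
begin

lemma thr_nonneg: "0 \<le> thr a \<sigma>' p s m u"
  unfolding thr_def using a_pos ln_nonneg vnorm_nonneg[of m u] by simp

lemma signal_level_le_thr: "a * vnorm m u - thr a \<sigma>' p s m u \<le> thr a \<sigma>' p s m u"
  unfolding thr_def using a_pos ln_nonneg vnorm_nonneg[of m u] by simp

end

lemma thr_restrict [simp]: "thr a \<sigma>' p s n (\<lambda>k\<in>{..<n}. u k) = thr a \<sigma>' p s n u"
  by (simp add: thr_def)

definition null_tail :: "nat \<Rightarrow> nat \<Rightarrow> nat \<Rightarrow> real \<Rightarrow> real \<Rightarrow> real" where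
  "null_tail m p s a \<sigma>' = measure (std_gauss \<Otimes>\<^sub>M gauss_vec m)
     {x \<in> space (std_gauss \<Otimes>\<^sub>M gauss_vec m). thr a \<sigma>' p s m (snd x) < \<sigma>' * fst x}"

definition signal_tail :: "nat \<Rightarrow> nat \<Rightarrow> nat \<Rightarrow> real \<Rightarrow> real \<Rightarrow> real" where
  "signal_tail m p s a \<sigma>' = measure (std_gauss \<Otimes>\<^sub>M gauss_vec m)
     {x \<in> space (std_gauss \<Otimes>\<^sub>M gauss_vec m).
        max 0 (a * vnorm m (snd x) - thr a \<sigma>' p s m (snd x)) < \<sigma>' * fst x}"

lemma psi_eq_tails:
  "psi m p s a \<sigma>' = (real p - real s) * null_tail m p s a \<sigma>' + real s * signal_tail m p s a \<sigma>'"
  by (simp add: psi_def null_tail_def signal_tail_def Let_def)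

lemma null_tail_le_signal_tail:
  assumes "0 < a" "0 \<le> ln (real p / real s - 1)"
  shows "null_tail m p s a \<sigma>' \<le> signal_tail m p s a \<sigma>'"
proof -
  interpret prob_space "std_gauss \<Otimes>\<^sub>M gauss_vec m" by (intro prob_space_pair) simp_all
  let ?N = "std_gauss \<Otimes>\<^sub>M gauss_vec m"
  let ?null = "{x \<in> space ?N. thr a \<sigma>' p s m (snd x) < \<sigma>' * fst x}"
  let ?signal = "{x \<in> space ?N. max 0 (a * vnorm m (snd x) - thr a \<sigma>' p s m (snd x)) < \<sigma>' * fst x}"
  have "Measurable.pred ?N (\<lambda>x. max 0 (a * vnorm m (snd x) - thr a \<sigma>' p s m (snd x)) < \<sigma>' * fst x)"
    unfolding thr_def by measurable
  then have "?signal \<in> sets ?N" by (rule predE)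
  moreover have "?null \<subseteq> ?signal"
  proof
    fix x assume "x \<in> ?null"
    moreover have "max 0 (a * vnorm m (snd x) - thr a \<sigma>' p s m (snd x)) \<le> thr a \<sigma>' p s m (snd x)"
      using thr_nonneg[OF assms] signal_level_le_thr[OF assms] by (simp only: max.bounded_iff)
    ultimately show "x \<in> ?signal" by auto
  qed
  ultimately show ?thesis
    unfolding null_tail_def signal_tail_def by (intro finite_measure_mono)
qed

lemma sum_if_zero_le:
  fixes m0 m1 :: real and \<beta> :: "nat \<Rightarrow> real"
  assumes "m0 \<le> m1" "card {i. i < p \<and> \<beta> i \<noteq> 0} \<le> s"
  shows "(\<Sum>i<p. if \<beta> i = 0 then m0 else m1) \<le> (real p - real s) * m0 + real s * m1"
proof -
  let ?Z = "{i \<in> {..<p}. \<beta> i = 0}" and ?NZ = "{i \<in> {..<p}. \<beta> i \<noteq> 0}"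
  have "card ?Z + card ?NZ = card (?Z \<union> ?NZ)" by (rule card_Un_disjoint[symmetric]) auto
  also have "?Z \<union> ?NZ = {..<p}" by auto
  finally have "card ?Z + card ?NZ = p" by simp
  then have "(\<Sum>i<p. if \<beta> i = 0 then m0 else m1) = (real p - real (card ?NZ)) * m0 + real (card ?NZ) * m1"
    by (simp add: sum.If_cases Int_def flip: of_nat_add)
  also have "\<dots> \<le> (real p - real s) * m0 + real s * m1"
  proof -
    have "card ?NZ \<le> s" using assms(2) by (simp add: conj_commute)
    then have "0 \<le> (real s - real (card ?NZ)) * (m1 - m0)" using assms(1) by simp
    then show ?thesis by (simp add: algebra_simps)
  qed
  finally show ?thesis .
qed

section \<open>Misclassification of a single coordinate\<close>

lemma inner_residual_eq:
  fixes X :: "nat \<Rightarrow> nat \<Rightarrow> real"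
  assumes "i < p"
  shows "(\<Sum>k<n. X k i * ((\<Sum>j<p. X k j * \<beta> j) + e k - (\<Sum>j\<in>{..<p}-{i}. X k j * b j)))
       = (\<Sum>k<n. (X k i)\<^sup>2) * \<beta> i
         + (\<Sum>k<n. X k i * ((\<Sum>j\<in>{..<p}-{i}. X k j * (\<beta> j - b j)) + e k))"
proof -
  have row: "(\<Sum>j<p. X k j * \<beta> j) + e k - (\<Sum>j\<in>{..<p}-{i}. X k j * b j)
      = X k i * \<beta> i + ((\<Sum>j\<in>{..<p}-{i}. X k j * (\<beta> j - b j)) + e k)" for k
    using assms by (simp add: sum.remove[of "{..<p}" i] algebra_simps sum_subtractf)
  show ?thesis
    unfolding row by (simp add: distrib_left sum.distrib sum_distrib_right power2_eq_square mult.assoc)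
qed

lemma noise_variance_lt:
  assumes "vnorm p (\<lambda>j. b j - \<beta> j) < \<delta> * \<sigma>" "0 < \<sigma>"
  shows "sqrt ((\<Sum>j\<in>{..<p}-{i}. (\<beta> j - b j)\<^sup>2) + \<sigma>\<^sup>2) < \<sigma> * sqrt (1 + \<delta>\<^sup>2)"
proof -
  have "(\<Sum>j\<in>{..<p}-{i}. (\<beta> j - b j)\<^sup>2) \<le> (\<Sum>j<p. (\<beta> j - b j)\<^sup>2)"
    by (rule sum_mono2) auto
  also have "\<dots> = (vnorm p (\<lambda>j. b j - \<beta> j))\<^sup>2"
    unfolding vnorm_def by (simp add: sum_nonneg power2_commute)
  also have "\<dots> < (\<delta> * \<sigma>)\<^sup>2"
    using assms vnorm_nonneg by (intro power_strict_mono) auto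
  finally have "(\<Sum>j\<in>{..<p}-{i}. (\<beta> j - b j)\<^sup>2) + \<sigma>\<^sup>2 < (\<sigma> * sqrt (1 + \<delta>\<^sup>2))\<^sup>2"
    by (simp add: power_mult_distrib algebra_simps)
  then have "sqrt ((\<Sum>j\<in>{..<p}-{i}. (\<beta> j - b j)\<^sup>2) + \<sigma>\<^sup>2) < sqrt ((\<sigma> * sqrt (1 + \<delta>\<^sup>2))\<^sup>2)"
    by (rule real_sqrt_less_mono)
  then show ?thesis
    using assms(2) by simp
qed

locale selector_setting =
  fixes n1 n2 p s :: nat and a \<sigma> \<delta> :: real
    and betahat :: "(nat \<Rightarrow> nat \<Rightarrow> real) \<Rightarrow> (nat \<Rightarrow> real) \<Rightarrow> nat \<Rightarrow> real"
    and \<beta> :: "nat \<Rightarrow> real"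
  assumes sigma_pos: "0 < \<sigma>" and a_pos: "0 < a" and delta_pos: "0 < \<delta>"
    and s_ge: "1 \<le> s" and s_le: "real s \<le> real p / 2"
    and betahat_meas:
      "\<And>i. (\<lambda>\<omega>. betahat (X1 n1 p \<omega>) (Y1 n1 p \<sigma> \<beta> \<omega>) i) \<in> borel_measurable (data_space (n1 + n2) p)"
    and beta_Omega: "\<beta> \<in> Omega p s a"
begin

abbreviation "\<sigma>' \<equiv> \<sigma> * sqrt (1 + \<delta>\<^sup>2)"
abbreviation "D \<equiv> data_space (n1 + n2) p"
abbreviation "estimate \<omega> \<equiv> betahat (X1 n1 p \<omega>) (Y1 n1 p \<sigma> \<beta> \<omega>)"
abbreviation "far \<omega> \<equiv> \<delta> * \<sigma> \<le> vnorm p (\<lambda>j. estimate \<omega> j - \<beta> j)"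
abbreviation "selected i \<omega> \<equiv> selector n2 p (thr a \<sigma>' p s n2) (X2 n1 \<omega>) (Y2 n1 p \<sigma> \<beta> \<omega>) (estimate \<omega>) i"
abbreviation "miss i \<omega> \<equiv> selected i \<omega> \<noteq> eta \<beta> i"
\<comment> \<open>Given column \<zeta> of the second subsample, coordinate i can only be misclassified if the
  comparison variable \<sigma>' * \<epsilon> exceeds this level; it is the threshold in null_tail or signal_tail.\<close>
abbreviation "level i \<zeta> \<equiv>
  if \<beta> i = 0 then thr a \<sigma>' p s n2 \<zeta> else max 0 (a * vnorm n2 \<zeta> - thr a \<sigma>' p s n2 \<zeta>)"
abbreviation "column2 i x \<equiv> \<lambda>k. x (Inl (n1 + k, i))"
abbreviation "first_estimate x \<equiv> betahat (\<lambda>k j. if k < n1 \<and> j < p then x (Inl (k,j)) else 0)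
  (\<lambda>k. if k < n1 then (\<Sum>j<p. x (Inl (k,j)) * \<beta> j) + \<sigma> * x (Inr k) else 0)"

lemma beta_min: "j < p \<Longrightarrow> \<beta> j \<noteq> 0 \<Longrightarrow> a \<le> \<bar>\<beta> j\<bar>"
  using beta_Omega by (simp add: Omega_def)

lemma support_card_le: "card {i. i < p \<and> \<beta> i \<noteq> 0} \<le> s"
  using beta_Omega by (simp add: Omega_def)

lemma ln_nonneg: "0 \<le> ln (real p / real s - 1)"
  using ln_ratio_nonneg[OF s_ge s_le] .

lemma pred_far: "Measurable.pred D far"
proof -
  note betahat_meas [measurable]
  show ?thesis unfolding vnorm_def by measurable
qed

lemma pred_miss: "Measurable.pred D (miss i)"
proof -
  note betahat_meas [measurable] measurable_design_entry [measurable] measurable_noise_entry [measurable]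
  show ?thesis unfolding selector_def vnorm_def thr_def eta_def X2_def Y2_def Yobs_def by measurable
qed

lemma estimate_glue: "estimate (glue n1 n2 p i x w) = first_estimate x"
  by (simp add: X1_glue Y1_glue)

lemma vnorm_X2_glue: "i < p \<Longrightarrow> vnorm n2 (\<lambda>k. X2 n1 (glue n1 n2 p i x w) k i) = vnorm n2 (column2 i x)"
  unfolding vnorm_def by (auto simp: X2_glue intro!: sum.cong)

\<comment> \<open>Uses x / 0 = 0: a zero column has statistic 0 and threshold 0.\<close>
lemma not_selected_glue_if_column_zero:
  assumes "i < p" "vnorm n2 (column2 i x) = 0"
  shows "\<not> selected i (glue n1 n2 p i x w)"
  using assms by (simp add: selector_def thr_def vnorm_X2_glue)

lemma selected_glue_iff:
  assumes i: "i < p" and N_pos: "0 < vnorm n2 (column2 i x)"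
    and near: "vnorm p (\<lambda>j. first_estimate x j - \<beta> j) < \<delta> * \<sigma>"
  obtains c v where "(\<Sum>l\<in>nuisance_coords n1 n2 p i. (c l)\<^sup>2) = v" and "0 < v" and "sqrt v < \<sigma>'"
    and "\<And>w. selected i (glue n1 n2 p i x w)
           \<longleftrightarrow> thr a \<sigma>' p s n2 (column2 i x)
               < \<bar>vnorm n2 (column2 i x) * \<beta> i + (\<Sum>l\<in>nuisance_coords n1 n2 p i. c l * w l)\<bar>"
proof -
  let ?J = "{..<p} - {i}"
  let ?L = "nuisance_coords n1 n2 p i"
  let ?X = "\<lambda>w. X2 n1 (glue n1 n2 p i x w)"
  define u where "u = column2 i x"
  define N where "N = vnorm n2 u"
  define d where "d j = \<beta> j - first_estimate x j" for j
  \<comment> \<open>the direction X_i / |X_i| spread over the remaining entries of the second subsample\<close>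
  define c where "c l = (case l of Inl (k,j) \<Rightarrow> u (k - n1) * d j / N | Inr k \<Rightarrow> u (k - n1) * \<sigma> / N)" for l
  define v where "v = (\<Sum>j\<in>?J. (d j)\<^sup>2) + \<sigma>\<^sup>2"
  have N: "0 < N" using N_pos by (simp add: N_def u_def)
  have N2: "N\<^sup>2 = (\<Sum>k<n2. (u k)\<^sup>2)"
    unfolding N_def vnorm_def by (simp add: sum_nonneg)
  have noise: "(\<Sum>k<n2. u k * ((\<Sum>j\<in>?J. w (Inl (n1+k,j)) * d j) + \<sigma> * w (Inr (n1+k))))
      = N * (\<Sum>l\<in>?L. c l * w l)" for w
    unfolding sum_nuisance_coords c_def using N
    by (simp add: sum_distrib_left sum.distrib algebra_simps)
  have residual: "(\<Sum>k<n2. ?X w k i * (Y2 n1 p \<sigma> \<beta> (glue n1 n2 p i x w) k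
                     - (\<Sum>j\<in>?J. ?X w k j * first_estimate x j)))
      = N\<^sup>2 * \<beta> i + N * (\<Sum>l\<in>?L. c l * w l)" for w
  proof -
    have "(\<Sum>k<n2. ?X w k i * (Y2 n1 p \<sigma> \<beta> (glue n1 n2 p i x w) k
                     - (\<Sum>j\<in>?J. ?X w k j * first_estimate x j)))
        = (\<Sum>k<n2. ?X w k i * ((\<Sum>j<p. ?X w k j * \<beta> j) + \<sigma> * w (Inr (n1+k))
                     - (\<Sum>j\<in>?J. ?X w k j * first_estimate x j)))"
      by (intro sum.cong) (simp_all add: Y2_glue)
    also have "\<dots> = (\<Sum>k<n2. (?X w k i)\<^sup>2) * \<beta> i
        + (\<Sum>k<n2. ?X w k i * ((\<Sum>j\<in>?J. ?X w k j * d j) + \<sigma> * w (Inr (n1+k))))"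
      unfolding d_def by (rule inner_residual_eq[OF i])
    also have "\<dots> = N\<^sup>2 * \<beta> i
        + (\<Sum>k<n2. u k * ((\<Sum>j\<in>?J. w (Inl (n1+k,j)) * d j) + \<sigma> * w (Inr (n1+k))))"
      unfolding N2 u_def using i by (auto simp: X2_glue intro!: sum.cong)
    finally show ?thesis by (simp only: noise)
  qed
  show thesis
  proof (rule that)
    have "(\<Sum>l\<in>?L. (c l)\<^sup>2) = (\<Sum>k<n2. (u k)\<^sup>2 * v / N\<^sup>2)"
      unfolding sum_nuisance_coords c_def v_def
      by (intro sum.cong refl) (simp add: power_divide power_mult_distrib sum_divide_distrib[symmetric]
          sum_distrib_left add_divide_distrib algebra_simps)
    also have "\<dots> = (\<Sum>k<n2. (u k)\<^sup>2) * v / N\<^sup>2"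
      by (simp add: sum_divide_distrib[symmetric] sum_distrib_right[symmetric])
    also have "\<dots> = v"
      using N by (simp add: N2[symmetric])
    finally show "(\<Sum>l\<in>?L. (c l)\<^sup>2) = v" .
    show "0 < v"
      unfolding v_def using sigma_pos by (auto intro!: add_nonneg_pos sum_nonneg)
    show "sqrt v < \<sigma>'"
      unfolding v_def d_def by (rule noise_variance_lt[OF near sigma_pos])
    fix w
    have "\<bar>N\<^sup>2 * \<beta> i + N * (\<Sum>l\<in>?L. c l * w l)\<bar> / N
        = \<bar>N * (N * \<beta> i + (\<Sum>l\<in>?L. c l * w l))\<bar> / N"
      by (simp add: power2_eq_square algebra_simps)
    also have "\<dots> = \<bar>N * \<beta> i + (\<Sum>l\<in>?L. c l * w l)\<bar>"
      using N by (simp add: abs_mult)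
    finally have stat: "\<bar>N\<^sup>2 * \<beta> i + N * (\<Sum>l\<in>?L. c l * w l)\<bar> / N = \<bar>N * \<beta> i + (\<Sum>l\<in>?L. c l * w l)\<bar>" .
    from stat show "selected i (glue n1 n2 p i x w)
        \<longleftrightarrow> thr a \<sigma>' p s n2 (column2 i x) < \<bar>vnorm n2 (column2 i x) * \<beta> i + (\<Sum>l\<in>?L. c l * w l)\<bar>"
      using i unfolding selector_def estimate_glue residual
      by (simp add: vnorm_X2_glue thr_def N_def u_def)
  qed
qed

lemma conditional_miss_le:
  assumes i: "i < p"
  shows "emeasure (PiM (nuisance_coords n1 n2 p i) (\<lambda>_. std_gauss))
           {w \<in> space (PiM (nuisance_coords n1 n2 p i) (\<lambda>_. std_gauss)).
              \<not> far (glue n1 n2 p i x w) \<and> miss i (glue n1 n2 p i x w)}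
         \<le> 2 * emeasure std_gauss {e. level i (column2 i x) < \<sigma>' * e}"
proof -
  let ?P = "PiM (nuisance_coords n1 n2 p i) (\<lambda>_. std_gauss)"
  let ?E = "{w \<in> space ?P. \<not> far (glue n1 n2 p i x w) \<and> miss i (glue n1 n2 p i x w)}"
  let ?N = "vnorm n2 (column2 i x)" and ?T = "thr a \<sigma>' p s n2 (column2 i x)"
  note measurable_std_gauss_lincomb [measurable]
  consider "\<delta> * \<sigma> \<le> vnorm p (\<lambda>j. first_estimate x j - \<beta> j)" | "?N = 0"
    | "vnorm p (\<lambda>j. first_estimate x j - \<beta> j) < \<delta> * \<sigma>" "0 < ?N"
    using vnorm_nonneg[of n2 "column2 i x"] by fastforce
  then show ?thesis
  proof cases
    case 1
    then have "?E = {}" by (simp add: estimate_glue)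
    then show ?thesis by (simp only: emeasure_empty zero_le)
  next
    case 2
    show ?thesis
    proof (cases "\<beta> i = 0")
      case True
      with 2 have "?E = {}" by (simp add: not_selected_glue_if_column_zero[OF i] eta_def)
      then show ?thesis by (simp only: emeasure_empty zero_le)
    next
      case False
      with 2 have "level i (column2 i x) = 0" by (simp add: thr_def)
      moreover have "0 < \<sigma>'" by (intro mult_pos_pos sigma_pos) (simp add: add_pos_nonneg)
      ultimately show ?thesis
        using emeasure_le_twice_std_gauss_pos[of ?P "\<sigma>'" ?E] by simp
    qed
  next
    case 3
    then obtain c v where v: "(\<Sum>l\<in>nuisance_coords n1 n2 p i. (c l)\<^sup>2) = v" "0 < v" "sqrt v < \<sigma>'"
      and sel: "\<And>w. selected i (glue n1 n2 p i x w)
                 \<longleftrightarrow> ?T < \<bar>?N * \<beta> i + (\<Sum>l\<in>nuisance_coords n1 n2 p i. c l * w l)\<bar>"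
      using selected_glue_iff[OF i] by blast
    show ?thesis
    proof (cases "\<beta> i = 0")
      case True
      have "emeasure ?P ?E \<le> emeasure ?P {w \<in> space ?P. ?T < \<bar>\<Sum>l\<in>nuisance_coords n1 n2 p i. c l * w l\<bar>}"
        using True by (intro emeasure_mono) (auto simp: sel eta_def)
      also have "\<dots> \<le> 2 * emeasure std_gauss {e. ?T < \<sigma>' * e}"
        by (rule emeasure_abs_std_gauss_lincomb_gt_le[OF _ v thr_nonneg[OF a_pos ln_nonneg]]) simp
      finally show ?thesis using True by simp
    next
      case False
      have "?T + (a * ?N - ?T) \<le> \<bar>?N * \<beta> i\<bar>"
        using beta_min[OF i False] vnorm_nonneg[of n2 "column2 i x"]
        by (simp add: abs_mult mult_right_mono mult.commute[of "vnorm n2 (column2 i x)"])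
      then have "emeasure ?P {w \<in> space ?P. \<not> ?T < \<bar>?N * \<beta> i + (\<Sum>l\<in>nuisance_coords n1 n2 p i. c l * w l)\<bar>}
          \<le> 2 * emeasure std_gauss {e. max 0 (a * ?N - ?T) < \<sigma>' * e}"
        by (rule emeasure_shifted_std_gauss_lincomb_le_le[OF finite_nuisance_coords v])
      moreover have "emeasure ?P ?E
          \<le> emeasure ?P {w \<in> space ?P. \<not> ?T < \<bar>?N * \<beta> i + (\<Sum>l\<in>nuisance_coords n1 n2 p i. c l * w l)\<bar>}"
        using False by (intro emeasure_mono) (auto simp: sel eta_def)
      ultimately show ?thesis using False by simp
    qed
  qed
qed

lemma emeasure_near_miss_le:
  assumes i: "i < p"
  shows "emeasure D {\<omega> \<in> space D. \<not> far \<omega> \<and> miss i \<omega>}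
       \<le> 2 * emeasure (std_gauss \<Otimes>\<^sub>M gauss_vec n2)
               {x \<in> space (std_gauss \<Otimes>\<^sub>M gauss_vec n2). level i (snd x) < \<sigma>' * fst x}"
proof -
  let ?g = "\<lambda>\<zeta>. emeasure std_gauss {e. level i \<zeta> < \<sigma>' * e}"
  have level: "level i \<in> borel_measurable (gauss_vec n2)"
    unfolding thr_def by measurable
  have level_restrict: "level i (\<lambda>k\<in>{..<n2}. x (Inl (n1+k,i))) = level i (column2 i x)"
    for x :: "(nat \<times> nat) + nat \<Rightarrow> real"
    by simp
  have g: "?g \<in> borel_measurable (gauss_vec n2)"
    by (rule measurable_emeasure_std_gauss_gt[OF level])
  have "emeasure D {\<omega> \<in> space D. \<not> far \<omega> \<and> miss i \<omega>}
      = (\<integral>\<^sup>+x. emeasure (PiM (nuisance_coords n1 n2 p i) (\<lambda>_. std_gauss))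
             {w \<in> space (PiM (nuisance_coords n1 n2 p i) (\<lambda>_. std_gauss)).
                \<not> far (glue n1 n2 p i x w) \<and> miss i (glue n1 n2 p i x w)}
           \<partial>PiM (conditioning_coords n1 n2 p i) (\<lambda>_. std_gauss))"
    by (rule emeasure_data_space_conditional) (intro pred_intros_logic pred_far pred_miss)
  also have "\<dots> \<le> (\<integral>\<^sup>+x. 2 * ?g (\<lambda>k\<in>{..<n2}. x (Inl (n1+k,i)))
                    \<partial>PiM (conditioning_coords n1 n2 p i) (\<lambda>_. std_gauss))"
    by (intro nn_integral_mono) (simp only: level_restrict conditional_miss_le[OF i])
  also have "\<dots> = (\<integral>\<^sup>+\<zeta>. 2 * ?g \<zeta> \<partial>gauss_vec n2)"
    using g by (intro nn_integral_column[OF i]) simp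
  also have "\<dots> = 2 * (\<integral>\<^sup>+\<zeta>. ?g \<zeta> \<partial>gauss_vec n2)"
    by (rule nn_integral_cmult[OF g])
  also have "(\<integral>\<^sup>+\<zeta>. ?g \<zeta> \<partial>gauss_vec n2)
      = emeasure (std_gauss \<Otimes>\<^sub>M gauss_vec n2)
          {x \<in> space (std_gauss \<Otimes>\<^sub>M gauss_vec n2). level i (snd x) < \<sigma>' * fst x}"
    by (rule nn_integral_emeasure_std_gauss_gt[OF level])
  finally show ?thesis .
qed

lemma prob_near_miss_le:
  assumes "i < p"
  shows "measure D {\<omega> \<in> space D. \<not> far \<omega> \<and> miss i \<omega>}
       \<le> 2 * (if \<beta> i = 0 then null_tail n2 p s a \<sigma>' else signal_tail n2 p s a \<sigma>')"
proof -
  interpret D: prob_space D by simp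
  interpret N: prob_space "std_gauss \<Otimes>\<^sub>M gauss_vec n2" by (intro prob_space_pair) simp_all
  have "ennreal (measure D {\<omega> \<in> space D. \<not> far \<omega> \<and> miss i \<omega>})
      \<le> ennreal (2 * (if \<beta> i = 0 then null_tail n2 p s a \<sigma>' else signal_tail n2 p s a \<sigma>'))"
    using emeasure_near_miss_le[OF assms]
    by (cases "\<beta> i = 0")
      (simp_all add: D.emeasure_eq_measure N.emeasure_eq_measure null_tail_def signal_tail_def
         ennreal_mult flip: ennreal_numeral)
  then show ?thesis
    by (simp add: null_tail_def signal_tail_def)
qed

lemma sum_prob_near_miss_le:
  "(\<Sum>i<p. measure D {\<omega> \<in> space D. \<not> far \<omega> \<and> miss i \<omega>}) \<le> 2 * psi n2 p s a \<sigma>'"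
proof -
  have "(\<Sum>i<p. measure D {\<omega> \<in> space D. \<not> far \<omega> \<and> miss i \<omega>})
      \<le> (\<Sum>i<p. 2 * (if \<beta> i = 0 then null_tail n2 p s a \<sigma>' else signal_tail n2 p s a \<sigma>'))"
    by (rule sum_mono) (rule prob_near_miss_le, simp)
  also have "\<dots> \<le> 2 * psi n2 p s a \<sigma>'"
    using sum_if_zero_le[OF null_tail_le_signal_tail[OF a_pos ln_nonneg, of n2 "\<sigma>'"] support_card_le]
    by (simp add: psi_eq_tails flip: sum_distrib_left)
  finally show ?thesis .
qed

lemma expected_misses_le:
  "integral\<^sup>L D (\<lambda>\<omega>. real (card {i. i < p \<and> miss i \<omega>}))
     \<le> real p * measure D {\<omega> \<in> space D. far \<omega>} + 2 * psi n2 p s a \<sigma>'"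
proof -
  interpret D: prob_space D by simp
  define Far where "Far = {\<omega> \<in> space D. far \<omega>}"
  define Miss where "Miss i = {\<omega> \<in> space D. miss i \<omega>}" for i
  define Near_miss where "Near_miss i = {\<omega> \<in> space D. \<not> far \<omega> \<and> miss i \<omega>}" for i
  have sets: "Far \<in> sets D" "Miss i \<in> sets D" "Near_miss i \<in> sets D" for i
    unfolding Far_def Miss_def Near_miss_def by (intro predE pred_intros_logic pred_far pred_miss)+
  have card: "real (card {i. i < p \<and> miss i \<omega>}) = (\<Sum>i<p. indicator (Miss i) \<omega>)"
    if "\<omega> \<in> space D" for \<omega>
  proof -
    have "real (card {i. i < p \<and> miss i \<omega>}) = (\<Sum>i\<in>{i \<in> {..<p}. miss i \<omega>}. 1)"
      by (simp add: conj_commute)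
    also have "\<dots> = (\<Sum>i<p. if miss i \<omega> then 1 else 0)"
      by (rule sum.inter_filter) simp
    also have "\<dots> = (\<Sum>i<p. indicator (Miss i) \<omega>)"
      using that by (intro sum.cong) (auto simp: Miss_def indicator_def)
    finally show ?thesis .
  qed
  have "integral\<^sup>L D (\<lambda>\<omega>. real (card {i. i < p \<and> miss i \<omega>})) = integral\<^sup>L D (\<lambda>\<omega>. \<Sum>i<p. indicator (Miss i) \<omega>)"
    by (rule Bochner_Integration.integral_cong[OF refl card])
  also have "\<dots> = (\<Sum>i<p. measure D (Miss i))"
    using sets by (subst Bochner_Integration.integral_sum)
      (auto intro!: integrable_real_indicator simp: D.emeasure_eq_measure)
  also have "\<dots> \<le> (\<Sum>i<p. measure D Far + measure D (Near_miss i))"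
  proof (rule sum_mono)
    fix i
    have "Miss i \<subseteq> Far \<union> Near_miss i" by (auto simp: Miss_def Far_def Near_miss_def)
    then show "measure D (Miss i) \<le> measure D Far + measure D (Near_miss i)"
      using sets by (intro order.trans[OF D.finite_measure_mono measure_Un_le]) auto
  qed
  also have "\<dots> \<le> real p * measure D Far + 2 * psi n2 p s a \<sigma>'"
    using sum_prob_near_miss_le by (simp add: sum.distrib Near_miss_def)
  finally show ?thesis unfolding Far_def .
qed

lemma prob_some_miss_le:
  "measure D {\<omega> \<in> space D. \<exists>i<p. miss i \<omega>}
     \<le> measure D {\<omega> \<in> space D. far \<omega>} + 2 * psi n2 p s a \<sigma>'"
proof -
  interpret D: prob_space D by simp
  let ?near_miss = "\<lambda>i. {\<omega> \<in> space D. \<not> far \<omega> \<and> miss i \<omega>}"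
  have sets: "{\<omega> \<in> space D. far \<omega>} \<in> sets D" "?near_miss i \<in> sets D" for i
    by (intro predE pred_intros_logic pred_far pred_miss)+
  have "{\<omega> \<in> space D. \<exists>i<p. miss i \<omega>} \<subseteq> {\<omega> \<in> space D. far \<omega>} \<union> (\<Union>i<p. ?near_miss i)"
    by auto
  then have "measure D {\<omega> \<in> space D. \<exists>i<p. miss i \<omega>}
      \<le> measure D {\<omega> \<in> space D. far \<omega>} + measure D (\<Union>i<p. ?near_miss i)"
    using sets by (intro order.trans[OF D.finite_measure_mono measure_Un_le]) auto
  also have "measure D (\<Union>i<p. ?near_miss i) \<le> (\<Sum>i<p. measure D (?near_miss i))"
    using sets by (intro D.finite_measure_subadditive_finite) auto
  finally show ?thesis
    using sum_prob_near_miss_le by simp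
qed

end

lemma powr_ratio_split:
  fixes x y e :: real
  assumes "0 \<le> x" "0 < y"
  shows "(x / (2 * y)) powr e = (x / 2) powr e * y powr (- e)"
proof -
  have "(x / (2 * y)) powr e = (x / 2 / y) powr e" by simp
  also have "\<dots> = (x / 2) powr e * y powr (- e)"
    using assms by (simp add: powr_divide powr_minus_divide powr_mult)
  finally show ?thesis .
qed

lemma mult_powr_minus:
  fixes x e :: real
  assumes "0 < x"
  shows "x * x powr (- e) = x powr (1 - e)"
proof -
  have "x powr (1 - e) = x powr 1 * x powr (- e)"
    unfolding powr_add[symmetric] by simp
  then show ?thesis using assms by simp
qed

theorem theorem2:
  fixes n1 n2 p s :: nat
    and a \<sigma> A \<delta> C0 C1 C2 :: real
    and betahat :: "(nat \<Rightarrow> nat \<Rightarrow> real) \<Rightarrow> (nat \<Rightarrow> real) \<Rightarrow> nat \<Rightarrow> real"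
  assumes sigma_pos: "0 < \<sigma>"
    and a_pos: "0 < a"
    and A_ge: "A \<ge> 16 + 4 * sqrt 2"
    and s_ge: "1 \<le> s"
    and s_le: "real s \<le> real p / 2"
    and n2_pos: "0 < n2"
    and delta: "0 < \<delta>" "\<delta> \<le> 1"
    and sqrt_slope_min:
      "\<And>X Y b. sqrt_slope_obj A (n1 + n2) n1 p X Y (betahat X Y)
                 \<le> sqrt_slope_obj A (n1 + n2) n1 p X Y b"
    and betahat_meas:
      "\<And>\<beta> i. (\<lambda>\<omega>. betahat (X1 n1 p \<omega>) (Y1 n1 p \<sigma> \<beta> \<omega>) i)
                \<in> borel_measurable (data_space (n1 + n2) p)"
    and slope_fact:
      "\<And>\<delta>' \<beta>. 0 < \<delta>' \<Longrightarrow> \<delta>' \<le> 1 \<Longrightarrow>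
          real n1 > C0 / \<delta>'\<^sup>2 * real s * ln (exp 1 * real p / real s) \<Longrightarrow>
          (\<forall>i\<ge>p. \<beta> i = 0) \<Longrightarrow> card {i. i < p \<and> \<beta> i \<noteq> 0} \<le> s \<Longrightarrow>
          measure (data_space (n1 + n2) p)
            {\<omega> \<in> space (data_space (n1 + n2) p).
               vnorm p (\<lambda>i. betahat (X1 n1 p \<omega>) (Y1 n1 p \<sigma> \<beta> \<omega>) i - \<beta> i) \<ge> \<delta>' * \<sigma>}
          \<le> C1 * (real s / (2 * real p)) powr (C2 * real s)"
    and n1_large: "real n1 > C0 / \<delta>\<^sup>2 * real s * ln (exp 1 * real p / real s)"
  shows "\<forall>\<beta> \<in> Omega p s a.
     (integral\<^sup>L (data_space (n1 + n2) p)
        (\<lambda>\<omega>. real (card {i. i < p \<and>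
            selector n2 p (thr a (\<sigma> * sqrt (1 + \<delta>\<^sup>2)) p s n2) (X2 n1 \<omega>) (Y2 n1 p \<sigma> \<beta> \<omega>)
              (betahat (X1 n1 p \<omega>) (Y1 n1 p \<sigma> \<beta> \<omega>)) i \<noteq> eta \<beta> i}))
      \<le> 2 * psi n2 p s a (\<sigma> * sqrt (1 + \<delta>\<^sup>2))
        + C1 * (real s / 2) powr (C2 * real s) * real p powr (1 - C2 * real s))
   \<and> (measure (data_space (n1 + n2) p)
        {\<omega> \<in> space (data_space (n1 + n2) p). \<exists>i<p.
            selector n2 p (thr a (\<sigma> * sqrt (1 + \<delta>\<^sup>2)) p s n2) (X2 n1 \<omega>) (Y2 n1 p \<sigma> \<beta> \<omega>)
              (betahat (X1 n1 p \<omega>) (Y1 n1 p \<sigma> \<beta> \<omega>)) i \<noteq> eta \<beta> i}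
      \<le> 2 * psi n2 p s a (\<sigma> * sqrt (1 + \<delta>\<^sup>2))
        + C1 * (real s / 2) powr (C2 * real s) * real p powr (- C2 * real s))"
proof (intro ballI conjI)
  fix \<beta> assume \<beta>: "\<beta> \<in> Omega p s a"
  interpret selector_setting n1 n2 p s a \<sigma> \<delta> betahat \<beta>
    using sigma_pos a_pos delta(1) s_ge s_le betahat_meas \<beta> by unfold_locales
  \<comment> \<open>The hypotheses on the Square-Root SLOPE estimator are used only through slope_fact.\<close>
  have p_pos: "0 < real p" using s_ge s_le by simp
  have far: "measure D {\<omega> \<in> space D. far \<omega>}
      \<le> C1 * (real s / 2) powr (C2 * real s) * real p powr (- C2 * real s)"
    using slope_fact[OF delta n1_large] \<beta> powr_ratio_split[of "real s" "real p" "C2 * real s"] p_pos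
    by (simp add: Omega_def mult.assoc)
  have "real p * measure D {\<omega> \<in> space D. far \<omega>}
      \<le> C1 * (real s / 2) powr (C2 * real s) * (real p * real p powr (- C2 * real s))"
    using mult_left_mono[OF far, of "real p"] by (simp add: mult.assoc mult.left_commute)
  also have "real p * real p powr (- C2 * real s) = real p powr (1 - C2 * real s)"
    using mult_powr_minus[OF p_pos, of "C2 * real s"] by simp
  finally have "real p * measure D {\<omega> \<in> space D. far \<omega>}
      \<le> C1 * (real s / 2) powr (C2 * real s) * real p powr (1 - C2 * real s)" .
  with expected_misses_le show "integral\<^sup>L D (\<lambda>\<omega>. real (card {i. i < p \<and> miss i \<omega>}))
      \<le> 2 * psi n2 p s a \<sigma>' + C1 * (real s / 2) powr (C2 * real s) * real p powr (1 - C2 * real s)"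
    by linarith
  from prob_some_miss_le far show "measure D {\<omega> \<in> space D. \<exists>i<p. miss i \<omega>}
      \<le> 2 * psi n2 p s a \<sigma>' + C1 * (real s / 2) powr (C2 * real s) * real p powr (- C2 * real s)"
    by linarith
qed

end
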